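(* Let $K\ge2$ and $d\ge1$ with $d=2$ or $K\le d+1$. Then the Tammes problem and the Softmax Code problem have the same solutions: $$\operatorname{argmax}_{\mathbf W\in\mathrm{OB}(d,K)}\rho_{\text{one-vs-rest}}(\mathbf W)=\operatorname{argmax}_{\mathbf W\in\mathrm{OB}(d,K)}\rho_{\text{one-vs-one}}(\mathbf W).$$
   Context: $\mathrm{OB}(d,K)$ is the set of real $d\times K$ matrices with unit-norm columns $\mathbf w_1,\dots,\mathbf w_K$. $\operatorname{dist}(\mathbf v,\mathcal W)=\inf\{\|\mathbf v-\mathbf w\|_2:\mathbf w\in\operatorname{conv}(\mathcal W)\}$; $\rho_{\text{one-vs-rest}}(\mathbf W)=\min_k\operatorname{dist}(\mathbf w_k,\{\mathbf w_j\}_{j\ne k})$; $\rho_{\text{one-vs-one}}(\mathbf W)=\min_k\min_{k'\ne k}\|\mathbf w_k-\mathbf w_{k'}\|_2$. *)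

theory Defs
  imports "HOL-Analysis.Analysis"
begin

text \<open>A d x K real matrix is a value of type real^'k^'d (rows indexed by 'd,
 columns by 'k), with d = CARD('d), K = CARD('k). Column k is column k W.\<close>

definition OB :: "(real^'k^'d) set" where
  "OB = {W. \<forall>k. norm (column k W) = 1}"

definition dist_hull :: "'a::euclidean_space \<Rightarrow> 'a set \<Rightarrow> real" where
  "dist_hull v S = Inf {norm (v - w) | w. w \<in> convex hull S}"

definition rho_one_vs_rest :: "real^'k^'d \<Rightarrow> real" where
  "rho_one_vs_rest W =
     Min (range (\<lambda>k::'k. dist_hull (column k W) {column j W | j. j \<noteq> k}))"

definition rho_one_vs_one :: "real^'k^'d \<Rightarrow> real" where
  "rho_one_vs_one W =
     Min (range (\<lambda>k::'k. Min ((\<lambda>k'. norm (column k W - column k' W)) ` (UNIV - {k}))))"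

definition argmax_on :: "'a set \<Rightarrow> ('a \<Rightarrow> real) \<Rightarrow> 'a set" where
  "argmax_on A f = {x \<in> A. \<forall>y\<in>A. f y \<le> f x}"

end

theory Submission
  imports Defs
begin

text \<open>
  Both margins are governed by the Gram matrix of the columns \<open>w\<^sub>1, \<dots>, w\<^sub>K\<close>. For unit
  vectors \<open>\<parallel>w\<^sub>k - w\<^sub>j\<parallel> = sqrt (2 - 2 w\<^sub>k \<bullet> w\<^sub>j)\<close>; and if \<open>w\<^sub>k \<bullet> w\<^sub>j \<le> c\<close> for all \<open>j \<noteq> k\<close>,
  the half-space \<open>{x. w\<^sub>k \<bullet> x \<le> c}\<close> contains the hull of the other columns, so \<open>w\<^sub>k\<close> is at
  distance at least \<open>1 - c\<close> from it. Hence both argmax sets are \<open>{W. w\<^sub>k \<bullet> w\<^sub>j \<le> c for k \<noteq> j}\<close>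
  as soon as this set is nonempty, every configuration has a pair with \<open>w\<^sub>k \<bullet> w\<^sub>j \<ge> c\<close>, and
  every configuration has a column within \<open>1 - c\<close> of the hull of the others, all columns being
  at distance \<open>\<ge> 1 - c\<close> only when all inner products are \<open>\<le> c\<close>.

  For \<open>K \<le> d + 1\<close> the threshold is \<open>c = -1/(K-1)\<close>, attained by the regular simplex: the
  squared distances from the columns to the centroids of the remaining ones sum to
  \<open>(K\<^sup>3 - K \<parallel>\<Sum>\<^sub>k w\<^sub>k\<parallel>\<^sup>2) / (K-1)\<^sup>2\<close>. For \<open>d = 2\<close> it is \<open>c = cos (2\<pi>/K)\<close>, attained by the
  regular \<open>K\<close>-gon: ordering the columns by angle, consecutive angular gaps sum to \<open>2\<pi>\<close>, and a
  column whose neighbours lie at angular distances \<open>a\<close> and \<open>b\<close> is within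
  \<open>cos ((a - b)/2) - cos ((a + b)/2)\<close> of the chord joining them.
\<close>

lemma UNIV_remove_nonempty:
  assumes "CARD('k::finite) \<ge> 2"
  shows "UNIV - {k::'k} \<noteq> {}"
proof
  assume "UNIV - {k} = {}"
  then have "(UNIV::'k set) = {k}" by auto
  then have "CARD('k) = card {k}" by (simp only:)
  with assms show False by simp
qed

lemma lessThan_CARD_nonempty: "{..<CARD('k::finite)} \<noteq> {}"
  by (simp add: lessThan_empty_iff card_eq_0_iff)

lemma ex_le_average:
  fixes f :: "'a \<Rightarrow> real"
  assumes "finite A" "A \<noteq> {}"
  shows "\<exists>x\<in>A. f x \<le> sum f A / card A"
proof (rule ccontr)
  assume "\<not> ?thesis"
  then have "(\<Sum>x\<in>A. sum f A / card A) < sum f A"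
    using assms by (intro sum_strict_mono) auto
  then show False using assms by simp
qed

lemma eq_average_if_ge_average:
  fixes f :: "'a \<Rightarrow> real"
  assumes "finite A" and ge: "\<forall>y\<in>A. sum f A / card A \<le> f y" and "x \<in> A"
  shows "f x = sum f A / card A"
proof (rule ccontr)
  assume "f x \<noteq> sum f A / card A"
  then have "sum f A / card A < f x" using ge \<open>x \<in> A\<close> by force
  then have "(\<Sum>y\<in>A. sum f A / card A) < sum f A"
    using assms(1) ge \<open>x \<in> A\<close> by (intro sum_strict_mono_ex1) auto
  then show False using assms(1) \<open>x \<in> A\<close> by (cases "A = {}") auto
qed

lemma norm_diff_eq_sqrt_inner:
  fixes u v :: "'a::real_inner"
  assumes "norm u = 1" "norm v = 1"
  shows "norm (u - v) = sqrt (2 - 2 * (u \<bullet> v))"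
proof -
  have "norm (u - v)^2 = 2 - 2 * (u \<bullet> v)"
    using assms by (simp add: power2_norm_eq_inner inner_diff_left inner_diff_right
        inner_commute norm_eq_1)
  then show ?thesis by (metis norm_ge_zero real_sqrt_unique)
qed

lemma dist_hull_le:
  assumes "p \<in> convex hull S"
  shows "dist_hull v S \<le> norm (v - p)"
  unfolding dist_hull_def
  by (rule cInf_lower) (use assms in \<open>auto intro!: bdd_belowI[where m=0]\<close>)

lemma le_dist_hull:
  assumes "S \<noteq> {}" "\<And>p. p \<in> convex hull S \<Longrightarrow> M \<le> norm (v - p)"
  shows "M \<le> dist_hull v S"
  unfolding dist_hull_def
proof (rule cInf_greatest)
  show "{norm (v - w) |w. w \<in> convex hull S} \<noteq> {}"
    using assms(1) hull_subset by fastforce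
qed (use assms(2) in auto)

lemma dist_hull_ge_of_inner_le:
  assumes "norm v = 1" "S \<noteq> {}" "\<And>s. s \<in> S \<Longrightarrow> v \<bullet> s \<le> c"
  shows "1 - c \<le> dist_hull v S"
proof (rule le_dist_hull[OF assms(2)])
  fix p assume "p \<in> convex hull S"
  moreover have "convex hull S \<subseteq> {x. v \<bullet> x \<le> c}"
    by (rule hull_minimal) (use assms(3) convex_halfspace_le in auto)
  ultimately have "v \<bullet> p \<le> c" by auto
  moreover have "v \<bullet> (v - p) \<le> norm v * norm (v - p)" by (rule norm_cauchy_schwarz)
  ultimately show "1 - c \<le> norm (v - p)"
    using assms(1) by (simp add: inner_diff_right norm_eq_1)
qed

section \<open>Reduction to a threshold on inner products\<close>

definition pairwise_inner_le :: "real \<Rightarrow> ('k \<Rightarrow> 'a::real_inner) \<Rightarrow> bool" where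
  "pairwise_inner_le c w \<longleftrightarrow> (\<forall>i j. i \<noteq> j \<longrightarrow> w i \<bullet> w j \<le> c)"

definition dist_to_rest :: "('k \<Rightarrow> 'a::euclidean_space) \<Rightarrow> 'k \<Rightarrow> real" where
  "dist_to_rest w k = dist_hull (w k) {w j | j. j \<noteq> k}"

lemma le_rho_one_vs_rest_iff:
  "M \<le> rho_one_vs_rest W \<longleftrightarrow> (\<forall>k. M \<le> dist_to_rest (\<lambda>j. column j W) k)"
  unfolding rho_one_vs_rest_def dist_to_rest_def by (subst Min_ge_iff) auto

lemma rho_one_vs_rest_le: "rho_one_vs_rest W \<le> dist_to_rest (\<lambda>j. column j W) k"
  unfolding rho_one_vs_rest_def dist_to_rest_def by (rule Min_le) auto

lemma le_rho_one_vs_one_iff: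
  assumes "CARD('k::finite) \<ge> 2"
  shows "M \<le> rho_one_vs_one (W::real^'k^'d) \<longleftrightarrow>
    (\<forall>k k'. k \<noteq> k' \<longrightarrow> M \<le> norm (column k W - column k' W))"
proof -
  have "M \<le> Min ((\<lambda>k'. norm (column k W - column k' W)) ` (UNIV - {k}))
      \<longleftrightarrow> (\<forall>k'. k \<noteq> k' \<longrightarrow> M \<le> norm (column k W - column k' W))" for k
    using UNIV_remove_nonempty[OF assms, of k] by (subst Min_ge_iff) auto
  then show ?thesis unfolding rho_one_vs_one_def by (subst Min_ge_iff) auto
qed

lemma rho_one_vs_one_le:
  assumes "k \<noteq> k'"
  shows "rho_one_vs_one (W::real^'k::finite^'d) \<le> norm (column k W - column k' W)"
proof -
  have "rho_one_vs_one W \<le> Min ((\<lambda>k'. norm (column k W - column k' W)) ` (UNIV - {k}))"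
    unfolding rho_one_vs_one_def by (rule Min_le) auto
  also have "\<dots> \<le> norm (column k W - column k' W)"
    using assms by (intro Min_le) auto
  finally show ?thesis .
qed

lemma argmax_on_eq_level_set:
  assumes "\<And>x. x \<in> A \<Longrightarrow> f x \<le> M"
    and "\<And>x. x \<in> A \<Longrightarrow> M \<le> f x \<longleftrightarrow> Q x"
    and "\<exists>x\<in>A. Q x"
  shows "argmax_on A f = {x\<in>A. Q x}"
proof -
  obtain x0 where x0: "x0 \<in> A" "Q x0" using assms(3) by blast
  show ?thesis
    unfolding argmax_on_def
  proof safe
    fix x assume "x \<in> A" "\<forall>y\<in>A. f y \<le> f x"
    then have "M \<le> f x" using x0 assms(2)[of x0] by force
    then show "Q x" using assms(2) \<open>x \<in> A\<close> by blast
  next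
    fix x y assume "x \<in> A" "Q x" "y \<in> A"
    then show "f y \<le> f x" using assms(1)[of y] assms(2)[of x] by auto
  qed
qed

lemma OB_of_columns:
  fixes w :: "'k::finite \<Rightarrow> real^'d"
  assumes "\<forall>k. norm (w k) = 1"
  shows "(\<chi> i j. w j $ i) \<in> OB" and "(\<lambda>j. column j (\<chi> i j. w j $ i)) = w"
  using assms by (simp_all add: OB_def column_def vec_eq_iff)

lemma argmax_rho_one_vs_rest_eq:
  fixes c :: real
  assumes K2: "CARD('k::finite) \<ge> 2"
    and close: "\<And>w::'k \<Rightarrow> real^'d. \<forall>k. norm (w k) = 1 \<Longrightarrow> \<exists>k. dist_to_rest w k \<le> 1 - c"
    and rigid: "\<And>w::'k \<Rightarrow> real^'d. \<forall>k. norm (w k) = 1 \<Longrightarrow>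
        \<forall>k. 1 - c \<le> dist_to_rest w k \<Longrightarrow> pairwise_inner_le c w"
    and attained: "\<exists>W\<in>(OB :: (real^'k^'d) set). pairwise_inner_le c (\<lambda>j. column j W)"
  shows "argmax_on (OB :: (real^'k^'d) set) rho_one_vs_rest
       = {W\<in>OB. pairwise_inner_le c (\<lambda>j. column j W)}"
proof (rule argmax_on_eq_level_set[OF _ _ attained])
  fix W :: "real^'k^'d" assume "W \<in> OB"
  then have unit: "\<forall>k. norm (column k W) = 1" by (simp add: OB_def)
  show "rho_one_vs_rest W \<le> 1 - c"
    using close[OF unit] rho_one_vs_rest_le order_trans by blast
  have "1 - c \<le> dist_to_rest (\<lambda>j. column j W) k"
    if "pairwise_inner_le c (\<lambda>j. column j W)" for k
    unfolding dist_to_rest_def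
  proof (rule dist_hull_ge_of_inner_le)
    show "{column j W |j. j \<noteq> k} \<noteq> {}" using UNIV_remove_nonempty[OF K2, of k] by blast
  qed (use unit that in \<open>auto simp: pairwise_inner_le_def\<close>)
  then show "1 - c \<le> rho_one_vs_rest W \<longleftrightarrow> pairwise_inner_le c (\<lambda>j. column j W)"
    using rigid[OF unit] le_rho_one_vs_rest_iff by blast
qed

lemma argmax_rho_one_vs_one_eq:
  fixes c :: real
  assumes K2: "CARD('k::finite) \<ge> 2"
    and close_pair: "\<And>w::'k \<Rightarrow> real^'d. \<forall>k. norm (w k) = 1 \<Longrightarrow> \<exists>i j. i \<noteq> j \<and> c \<le> w i \<bullet> w j"
    and attained: "\<exists>W\<in>(OB :: (real^'k^'d) set). pairwise_inner_le c (\<lambda>j. column j W)"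
  shows "argmax_on (OB :: (real^'k^'d) set) rho_one_vs_one
       = {W\<in>OB. pairwise_inner_le c (\<lambda>j. column j W)}"
proof (rule argmax_on_eq_level_set[OF _ _ attained])
  fix W :: "real^'k^'d" assume "W \<in> OB"
  then have unit: "\<forall>k. norm (column k W) = 1" by (simp add: OB_def)
  obtain i j where "i \<noteq> j" "c \<le> column i W \<bullet> column j W" using close_pair[OF unit] by blast
  then have "rho_one_vs_one W \<le> sqrt (2 - 2 * (column i W \<bullet> column j W))"
    using rho_one_vs_one_le[of i j W] unit by (simp add: norm_diff_eq_sqrt_inner)
  also have "\<dots> \<le> sqrt (2 - 2 * c)"
    using \<open>c \<le> column i W \<bullet> column j W\<close> by simp
  finally show "rho_one_vs_one W \<le> sqrt (2 - 2 * c)" .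
  show "sqrt (2 - 2 * c) \<le> rho_one_vs_one W \<longleftrightarrow> pairwise_inner_le c (\<lambda>j. column j W)"
    unfolding le_rho_one_vs_one_iff[OF K2] pairwise_inner_le_def
    using unit by (simp add: norm_diff_eq_sqrt_inner)
qed

lemma argmax_rho_eq_if_threshold:
  fixes c :: real
  assumes K2: "CARD('k::finite) \<ge> 2"
    and close_pair: "\<And>w::'k \<Rightarrow> real^'d. \<forall>k. norm (w k) = 1 \<Longrightarrow> \<exists>i j. i \<noteq> j \<and> c \<le> w i \<bullet> w j"
    and close: "\<And>w::'k \<Rightarrow> real^'d. \<forall>k. norm (w k) = 1 \<Longrightarrow> \<exists>k. dist_to_rest w k \<le> 1 - c"
    and rigid: "\<And>w::'k \<Rightarrow> real^'d. \<forall>k. norm (w k) = 1 \<Longrightarrow>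
        \<forall>k. 1 - c \<le> dist_to_rest w k \<Longrightarrow> pairwise_inner_le c w"
    and attained: "\<exists>w::'k \<Rightarrow> real^'d. (\<forall>k. norm (w k) = 1) \<and> pairwise_inner_le c w"
  shows "argmax_on (OB :: (real^'k^'d) set) rho_one_vs_rest = argmax_on OB rho_one_vs_one"
proof -
  obtain w :: "'k \<Rightarrow> real^'d" where unit: "\<forall>k. norm (w k) = 1" and "pairwise_inner_le c w"
    using attained by blast
  then have attained_OB: "\<exists>W\<in>(OB :: (real^'k^'d) set). pairwise_inner_le c (\<lambda>j. column j W)"
    using OB_of_columns[OF unit] by metis
  have "argmax_on (OB :: (real^'k^'d) set) rho_one_vs_rest
      = {W\<in>OB. pairwise_inner_le c (\<lambda>j. column j W)}"
    by (rule argmax_rho_one_vs_rest_eq[OF K2 close rigid attained_OB])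
  also have "\<dots> = argmax_on OB rho_one_vs_one"
    by (rule argmax_rho_one_vs_one_eq[OF K2 close_pair attained_OB, symmetric])
  finally show ?thesis .
qed

section \<open>The simplex threshold\<close>

lemma exists_pair_inner_ge_simplex:
  fixes w :: "'k::finite \<Rightarrow> 'a::real_inner"
  assumes K2: "CARD('k) \<ge> 2" and unit: "\<forall>k. norm (w k) = 1"
  shows "\<exists>i j. i \<noteq> j \<and> - 1 / (real CARD('k) - 1) \<le> w i \<bullet> w j"
proof (rule ccontr)
  define m where "m = real CARD('k) - 1"
  have m1: "m \<ge> 1" using K2 unfolding m_def by simp
  assume "\<not> ?thesis"
  then have far: "w i \<bullet> w j < - 1 / m" if "i \<noteq> j" for i j
    using that unfolding m_def by force
  have row_neg: "(\<Sum>j\<in>UNIV. w i \<bullet> w j) < 0" for i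
  proof -
    have "(\<Sum>j\<in>UNIV. w i \<bullet> w j) = w i \<bullet> w i + (\<Sum>j\<in>UNIV-{i}. w i \<bullet> w j)"
      by (simp add: sum.remove)
    also have "w i \<bullet> w i = 1" using unit by (simp add: norm_eq_1)
    also have "(\<Sum>j\<in>UNIV-{i}. w i \<bullet> w j) < (\<Sum>j\<in>UNIV-{i}. - 1 / m)"
      by (rule sum_strict_mono) (use UNIV_remove_nonempty[OF K2] far in auto)
    also have "(\<Sum>j\<in>UNIV-{i}. - 1 / m) = - 1"
      using m1 unfolding m_def by (simp add: card_Diff_subset)
    finally show ?thesis by simp
  qed
  have "0 \<le> sum w UNIV \<bullet> sum w UNIV" by simp
  also have "\<dots> = (\<Sum>i\<in>UNIV. \<Sum>j\<in>UNIV. w i \<bullet> w j)"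
    by (simp only: inner_sum_left inner_sum_right) (rule sum.swap)
  also have "\<dots> < (\<Sum>i\<in>(UNIV::'k set). 0)" by (intro sum_strict_mono row_neg) auto
  finally show False by simp
qed

definition centroid_rest :: "('k::finite \<Rightarrow> 'a::real_vector) \<Rightarrow> 'k \<Rightarrow> 'a" where
  "centroid_rest w k = (1 / (real CARD('k) - 1)) *\<^sub>R (sum w UNIV - w k)"

lemma centroid_rest_in_convex_hull:
  assumes "CARD('k::finite) \<ge> 2"
  shows "centroid_rest (w :: 'k \<Rightarrow> 'a::real_vector) k \<in> convex hull {w j | j. j \<noteq> k}"
proof -
  define m where "m = real CARD('k) - 1"
  have m1: "m \<ge> 1" using assms unfolding m_def by simp
  have "sum w UNIV - w k = (\<Sum>j\<in>UNIV-{k}. w j)" by (simp add: sum_diff1)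
  then have "centroid_rest w k = (\<Sum>j\<in>UNIV-{k}. (1 / m) *\<^sub>R w j)"
    unfolding centroid_rest_def m_def by (simp add: scaleR_sum_right)
  also have "\<dots> \<in> convex hull {w j | j. j \<noteq> k}"
  proof (rule convex_sum)
    show "(\<Sum>i\<in>UNIV - {k}. 1 / m) = 1"
      using m1 unfolding m_def by (simp add: card_Diff_subset)
  qed (use m1 in \<open>auto intro: hull_inc\<close>)
  finally show ?thesis .
qed

lemma sum_norm_diff_centroid_rest:
  fixes w :: "'k::finite \<Rightarrow> 'a::real_inner"
  assumes K2: "CARD('k) \<ge> 2" and unit: "\<forall>k. norm (w k) = 1"
  shows "(real CARD('k) - 1)^2 * (\<Sum>k\<in>UNIV. norm (w k - centroid_rest w k)^2)
       = real CARD('k)^3 - real CARD('k) * norm (sum w UNIV)^2"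
proof -
  define K m S where "K = real CARD('k)" and "m = real CARD('k) - 1" and "S = sum w UNIV"
  have "m \<noteq> 0" using K2 unfolding m_def by simp
  have expand: "m^2 * norm (w k - centroid_rest w k)^2 = K^2 - 2 * K * (w k \<bullet> S) + S \<bullet> S" for k
  proof -
    have "m *\<^sub>R (w k - centroid_rest w k) = K *\<^sub>R w k - S"
      using \<open>m \<noteq> 0\<close> unfolding centroid_rest_def K_def m_def S_def
      by (simp add: scaleR_diff_right algebra_simps)
    then have "m^2 * norm (w k - centroid_rest w k)^2 = norm (K *\<^sub>R w k - S)^2"
      by (metis norm_scaleR power2_abs power_mult_distrib)
    also have "\<dots> = K^2 - 2 * K * (w k \<bullet> S) + S \<bullet> S"
      unfolding power2_norm_eq_inner using unit
      by (simp add: inner_diff_left inner_diff_right inner_commute norm_eq_1 power2_eq_square)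
    finally show ?thesis .
  qed
  have "m^2 * (\<Sum>k\<in>UNIV. norm (w k - centroid_rest w k)^2)
      = (\<Sum>k\<in>UNIV. K^2 - 2 * K * (w k \<bullet> S) + S \<bullet> S)"
    by (simp add: sum_distrib_left expand)
  also have "\<dots> = K * K^2 - 2 * K * (S \<bullet> S) + K * (S \<bullet> S)"
    by (simp add: sum.distrib sum_subtractf sum_distrib_left[symmetric] inner_sum_left[symmetric]
        S_def K_def)
  finally show ?thesis
    unfolding K_def m_def S_def power2_norm_eq_inner[of "sum w UNIV"]
    by (simp add: power3_eq_cube power2_eq_square)
qed

lemma exists_dist_to_rest_le_simplex:
  fixes w :: "'k::finite \<Rightarrow> 'a::euclidean_space"
  assumes K2: "CARD('k) \<ge> 2" and unit: "\<forall>k. norm (w k) = 1"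
  shows "\<exists>k. dist_to_rest w k \<le> 1 + 1 / (real CARD('k) - 1)"
proof -
  define K m where "K = real CARD('k)" and "m = real CARD('k) - 1"
  define r where "r k = norm (w k - centroid_rest w k)" for k
  have m0: "m > 0" and K0: "K > 0" and Km: "K = m + 1"
    using K2 unfolding K_def m_def by simp_all
  obtain k where k: "r k^2 \<le> (\<Sum>k\<in>UNIV. r k^2) / K"
    using ex_le_average[of UNIV "\<lambda>k. r k^2"] unfolding K_def by auto
  have "m^2 * (\<Sum>k\<in>UNIV. r k^2) = K^3 - K * norm (sum w UNIV)^2"
    using sum_norm_diff_centroid_rest[OF K2 unit] unfolding r_def K_def m_def .
  then have sum_le: "m^2 * (\<Sum>k\<in>UNIV. r k^2) \<le> K^3"
    using K0 by (smt (verit) mult_nonneg_nonneg zero_le_power2)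
  have "(m * r k)^2 = m^2 * r k^2" by (simp add: power_mult_distrib)
  also have "\<dots> \<le> m^2 * ((\<Sum>k\<in>UNIV. r k^2) / K)" by (rule mult_left_mono[OF k]) simp
  also have "\<dots> = m^2 * (\<Sum>k\<in>UNIV. r k^2) / K" by simp
  also have "\<dots> \<le> K^3 / K" by (rule divide_right_mono[OF sum_le]) (use K0 in simp)
  also have "\<dots> = K^2" using K0 by (simp add: power3_eq_cube power2_eq_square)
  finally have "m * r k \<le> K" by (rule power2_le_imp_le) (use K0 in simp)
  then have "r k \<le> 1 + 1 / m"
    unfolding Km using m0 by (simp add: field_simps)
  moreover have "dist_to_rest w k \<le> r k"
    unfolding dist_to_rest_def r_def
    by (rule dist_hull_le[OF centroid_rest_in_convex_hull[OF K2]])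
  ultimately have "dist_to_rest w k \<le> 1 + 1 / m" by linarith
  then show ?thesis unfolding m_def by blast
qed

lemma sum_eq_0_if_dist_to_rest_ge_simplex:
  fixes w :: "'k::finite \<Rightarrow> 'a::euclidean_space"
  assumes K2: "CARD('k) \<ge> 2" and unit: "\<forall>k. norm (w k) = 1"
    and far: "\<forall>k. 1 + 1 / (real CARD('k) - 1) \<le> dist_to_rest w k"
  shows "sum w UNIV = 0"
proof -
  define K m where "K = real CARD('k)" and "m = real CARD('k) - 1"
  have m0: "m > 0" and K0: "K > 0" and Km: "K = m + 1"
    using K2 unfolding K_def m_def by simp_all
  have far_centroid: "K \<le> m * norm (w k - centroid_rest w k)" for k
  proof -
    have "1 + 1 / m \<le> norm (w k - centroid_rest w k)"
      using far[rule_format, of k]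
        dist_hull_le[OF centroid_rest_in_convex_hull[OF K2, of w k], of "w k"]
      unfolding dist_to_rest_def m_def by linarith
    then show ?thesis unfolding Km using m0 by (simp add: field_simps)
  qed
  have "(\<Sum>k\<in>(UNIV::'k set). K^2) \<le> (\<Sum>k\<in>UNIV. (m * norm (w k - centroid_rest w k))^2)"
    using far_centroid K0 by (intro sum_mono power_mono) (auto intro: less_imp_le)
  then have "K * K^2 \<le> m^2 * (\<Sum>k\<in>UNIV. norm (w k - centroid_rest w k)^2)"
    by (simp add: K_def sum_distrib_left power_mult_distrib)
  also have "\<dots> = K^3 - K * norm (sum w UNIV)^2"
    using sum_norm_diff_centroid_rest[OF K2 unit] unfolding K_def m_def .
  finally have "K * norm (sum w UNIV)^2 \<le> 0" by (simp add: power3_eq_cube power2_eq_square)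
  then show ?thesis using K0 by (simp add: mult_le_0_iff)
qed

lemma pairwise_inner_le_simplex_if_dist_to_rest_ge:
  fixes w :: "'k::finite \<Rightarrow> 'a::euclidean_space"
  assumes K2: "CARD('k) \<ge> 2" and unit: "\<forall>k. norm (w k) = 1"
    and far: "\<forall>k. 1 + 1 / (real CARD('k) - 1) \<le> dist_to_rest w k"
  shows "pairwise_inner_le (- 1 / (real CARD('k) - 1)) w"
  unfolding pairwise_inner_le_def
proof (intro allI impI)
  fix k j :: 'k assume "k \<noteq> j"
  define m where "m = real CARD('k) - 1"
  have "0 < 1 + 1 / m" using K2 unfolding m_def by (simp add: add_pos_pos)
  define c H where "c = centroid_rest w k" and "H = convex hull {w i | i. i \<noteq> k}"
  have "c = - (1 / m) *\<^sub>R w k"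
    using sum_eq_0_if_dist_to_rest_ge_simplex[OF K2 unit far]
    unfolding c_def centroid_rest_def m_def by simp
  then have diff: "w k - c = (1 + 1 / m) *\<^sub>R w k" by (simp add: algebra_simps)
  have "convex H" unfolding H_def by (rule convex_convex_hull)
  moreover have "closed H" unfolding H_def
    by (intro compact_imp_closed finite_imp_compact_convex_hull) simp
  moreover have "c \<in> H" unfolding H_def c_def by (rule centroid_rest_in_convex_hull[OF K2])
  moreover have "w j \<in> H" unfolding H_def using \<open>k \<noteq> j\<close> by (blast intro: hull_inc)
  \<comment> \<open>\<open>c\<close> is at distance exactly \<open>1 + 1 / m\<close> from \<open>w k\<close>, hence a nearest point of \<open>H\<close>\<close>
  moreover have "\<forall>z\<in>H. dist (w k) c \<le> dist (w k) z"
  proof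
    fix z assume "z \<in> H"
    have "dist (w k) c = 1 + 1 / m"
      using unit \<open>0 < 1 + 1 / m\<close> by (simp add: dist_norm diff)
    also have "\<dots> \<le> dist_to_rest w k" using far unfolding m_def by blast
    also have "\<dots> \<le> dist (w k) z"
      using dist_hull_le \<open>z \<in> H\<close> unfolding H_def dist_to_rest_def dist_norm by blast
    finally show "dist (w k) c \<le> dist (w k) z" .
  qed
  ultimately have "(w k - c) \<bullet> (w j - c) \<le> 0" by (rule any_closest_point_dot)
  moreover have "(w k - c) \<bullet> (w j - c) = (1 + 1 / m) * (w k \<bullet> w j + 1 / m)"
    using unit by (simp add: diff \<open>c = - (1 / m) *\<^sub>R w k\<close> algebra_simps inner_add_right norm_eq_1)
  ultimately have "w k \<bullet> w j + 1 / m \<le> 0"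
    using \<open>0 < 1 + 1 / m\<close> by (simp add: mult_le_0_iff)
  then show "w k \<bullet> w j \<le> - 1 / (real CARD('k) - 1)" unfolding m_def by simp
qed

lemma regular_simplex_coefficients:
  fixes m :: real
  assumes "m > 0"
  defines "a \<equiv> sqrt (1 + 1 / m)" and "b \<equiv> (1 / sqrt m - sqrt (1 + 1 / m)) / m"
  shows "a + b * m = 1 / sqrt m" and "2 * a * b + b^2 * m = - 1 / m"
    and "a^2 + 2 * a * b + b^2 * m = 1"
proof -
  have a2: "a^2 = 1 + 1 / m" unfolding a_def using assms by simp
  show ab: "a + b * m = 1 / sqrt m" unfolding a_def b_def using assms by simp
  have "2 * a * b + b^2 * m = b * (a + (a + b * m))"
    by (simp add: power2_eq_square algebra_simps)
  also have "\<dots> = b * (a + 1 / sqrt m)" by (simp only: ab)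
  also have "\<dots> = ((1 / sqrt m)^2 - a^2) / m"
    unfolding b_def a_def by (simp add: power2_eq_square algebra_simps)
  also have "\<dots> = - 1 / m" using assms by (simp add: a2 power_divide)
  finally show bm: "2 * a * b + b^2 * m = - 1 / m" .
  show "a^2 + 2 * a * b + b^2 * m = 1" using a2 bm by simp
qed

lemma orthonormal_family_exists:
  fixes A :: "'i set"
  assumes "finite A" "card A \<le> DIM('a::euclidean_space)"
  shows "\<exists>e::'i \<Rightarrow> 'a. \<forall>i\<in>A. \<forall>j\<in>A. e i \<bullet> e j = (if i = j then 1 else 0)"
proof -
  obtain e :: "'i \<Rightarrow> 'a" where "e ` A \<subseteq> Basis" "inj_on e A"
    using card_le_inj[OF assms(1) finite_Basis assms(2)] by auto
  then show ?thesis by (auto simp: inner_Basis inj_on_def image_subset_iff intro!: exI[of _ e])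
qed

lemma regular_simplex_from_orthonormal:
  fixes e :: "'k::finite \<Rightarrow> 'a::real_inner"
  assumes K2: "CARD('k) \<ge> 2"
    and ee: "\<And>i j. i \<noteq> apex \<Longrightarrow> j \<noteq> apex \<Longrightarrow> e i \<bullet> e j = (if i = j then 1 else 0)"
  shows "\<exists>w::'k \<Rightarrow> 'a. \<forall>i j. w i \<bullet> w j = (if i = j then 1 else - 1 / (real CARD('k) - 1))"
proof -
  define m u where "m = real CARD('k) - 1" and "u = (\<Sum>i\<in>UNIV - {apex}. e i)"
  have m0: "m > 0" using K2 unfolding m_def by simp
  have eu: "e i \<bullet> u = 1" if "i \<noteq> apex" for i
  proof -
    have "e i \<bullet> u = (\<Sum>j\<in>UNIV - {apex}. if i = j then 1 else 0)"
      unfolding u_def inner_sum_right by (rule sum.cong) (use ee that in auto)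
    also have "\<dots> = 1" using that by simp
    finally show ?thesis .
  qed
  have "u \<bullet> u = (\<Sum>i\<in>UNIV - {apex}. e i \<bullet> u)" by (simp add: u_def inner_sum_left)
  also have "\<dots> = m" using eu by (simp add: m_def card_Diff_subset)
  finally have uu: "u \<bullet> u = m" .
  define a b where "a = sqrt (1 + 1 / m)" and "b = (1 / sqrt m - sqrt (1 + 1 / m)) / m"
  note coeff = regular_simplex_coefficients[OF m0, folded a_def b_def]
  define w where "w k = (if k = apex then - (1 / sqrt m) *\<^sub>R u else a *\<^sub>R e k + b *\<^sub>R u)" for k
  have w_apex: "w apex = - (1 / sqrt m) *\<^sub>R u"
    and w_other: "k \<noteq> apex \<Longrightarrow> w k = a *\<^sub>R e k + b *\<^sub>R u" for k
    unfolding w_def by simp_all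
  have apex_apex: "w apex \<bullet> w apex = 1"
    using uu m0 by (simp add: w_apex power_divide[symmetric] power2_eq_square[symmetric])
  have apex_other: "w apex \<bullet> w j = - 1 / m" if "j \<noteq> apex" for j
  proof -
    have "w apex \<bullet> w j = - (1 / sqrt m) * (a + b * m)"
      using that eu uu
      by (simp add: w_apex w_other inner_add_right inner_commute add_divide_distrib)
    also have "\<dots> = - 1 / m" using m0 by (simp add: coeff(1))
    finally show ?thesis .
  qed
  have other_other: "w i \<bullet> w j = a^2 * (e i \<bullet> e j) + 2 * a * b + b^2 * m"
    if "i \<noteq> apex" "j \<noteq> apex" for i j
    using that eu uu
    by (simp add: w_other inner_add_left inner_add_right inner_commute power2_eq_square
        algebra_simps)
  have "w i \<bullet> w j = (if i = j then 1 else - 1 / m)" for i j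
    using apex_apex apex_other[of i] apex_other[of j] other_other[of i j] ee[of i j] coeff(2,3)
    by (cases "i = apex"; cases "j = apex") (auto simp: inner_commute)
  then show ?thesis unfolding m_def by blast
qed

lemma regular_simplex_exists:
  assumes K2: "CARD('k::finite) \<ge> 2" and dim: "CARD('k) \<le> DIM('a::euclidean_space) + 1"
  shows "\<exists>w::'k \<Rightarrow> 'a. (\<forall>k. norm (w k) = 1) \<and> pairwise_inner_le (- 1 / (real CARD('k) - 1)) w"
proof -
  fix k0 :: 'k
  have "card (UNIV - {k0}) \<le> DIM('a)" using dim by (simp add: card_Diff_subset)
  then obtain e :: "'k \<Rightarrow> 'a"
    where "\<forall>i\<in>UNIV - {k0}. \<forall>j\<in>UNIV - {k0}. e i \<bullet> e j = (if i = j then 1 else 0)"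
    using orthonormal_family_exists[of "UNIV - {k0}"] by auto
  then have "e i \<bullet> e j = (if i = j then 1 else 0)" if "i \<noteq> k0" "j \<noteq> k0" for i j
    using that by blast
  then obtain w :: "'k \<Rightarrow> 'a"
    where "\<forall>i j. w i \<bullet> w j = (if i = j then 1 else - 1 / (real CARD('k) - 1))"
    using regular_simplex_from_orthonormal[OF K2] by blast
  then show ?thesis by (intro exI[of _ w]) (simp add: norm_eq_1 pairwise_inner_le_def)
qed

lemma argmax_rho_eq_simplex:
  assumes K2: "CARD('k::finite) \<ge> 2" and Kd: "CARD('k) \<le> CARD('d::finite) + 1"
  shows "argmax_on (OB :: (real^'k^'d) set) rho_one_vs_rest = argmax_on OB rho_one_vs_one"
proof (rule argmax_rho_eq_if_threshold[where c = "- 1 / (real CARD('k) - 1)"])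
  show "CARD('k) \<ge> 2" by (fact K2)
  show "\<exists>i j. i \<noteq> j \<and> - 1 / (real CARD('k) - 1) \<le> w i \<bullet> w j"
    if "\<forall>k. norm (w k) = 1" for w :: "'k \<Rightarrow> real^'d"
    by (rule exists_pair_inner_ge_simplex[OF K2 that])
  show "\<exists>k. dist_to_rest w k \<le> 1 - - 1 / (real CARD('k) - 1)"
    if "\<forall>k. norm (w k) = 1" for w :: "'k \<Rightarrow> real^'d"
    using exists_dist_to_rest_le_simplex[OF K2 that] by simp
  show "pairwise_inner_le (- 1 / (real CARD('k) - 1)) w"
    if "\<forall>k. norm (w k) = 1" "\<forall>k. 1 - - 1 / (real CARD('k) - 1) \<le> dist_to_rest w k"
    for w :: "'k \<Rightarrow> real^'d"
    by (rule pairwise_inner_le_simplex_if_dist_to_rest_ge[OF K2 that(1)]) (use that(2) in simp)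
  show "\<exists>w::'k \<Rightarrow> real^'d. (\<forall>k. norm (w k) = 1) \<and> pairwise_inner_le (- 1 / (real CARD('k) - 1)) w"
    by (rule regular_simplex_exists[OF K2]) (use Kd in simp)
qed

section \<open>The planar threshold\<close>

lemma mult_pi_divide_le_pi:
  assumes "0 < c" "c \<le> real K"
  shows "c * pi / K \<le> pi"
proof -
  have "c * pi / K \<le> c * pi / c" using assms by (intro divide_left_mono) auto
  then show ?thesis using assms by simp
qed

lemma cos_add_two_pi_int: "cos (x + 2 * pi * of_int n) = cos x"
proof -
  have "cos (2 * pi * of_int n) = 1" "sin (2 * pi * of_int n) = 0"
    using cos_int_2pin[of n] sin_int_2pin[of n] by (simp_all add: mult.assoc)
  then show ?thesis by (simp add: cos_add)
qed

lemma cos_le_cos_two_pi_div: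
  assumes K: "(K::nat) \<ge> 2" and z: "0 < \<bar>z\<bar>" "\<bar>z\<bar> < int K"
  shows "cos (2 * pi * of_int z / K) \<le> cos (2 * pi / K)"
proof -
  define x where "x = 2 * pi * of_int \<bar>z\<bar> / K"
  have "x = \<bar>2 * pi * of_int z / K\<bar>" unfolding x_def by (simp add: abs_mult)
  then have "cos (2 * pi * of_int z / K) = cos x" by (simp only: cos_abs_real)
  have K0: "real K > 0" using K by simp
  have lo: "2 * pi / K \<le> x"
    using z K0 unfolding x_def by (intro divide_right_mono) auto
  have "x \<le> 2 * pi * (real K - 1) / K"
    using z K0 unfolding x_def by (intro divide_right_mono) auto
  also have "\<dots> = 2 * pi - 2 * pi / K" using K0 by (simp add: field_simps)
  finally have hi: "x \<le> 2 * pi - 2 * pi / K" .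
  have "cos x \<le> cos (2 * pi / K)"
  proof (cases "x \<le> pi")
    case True
    then show ?thesis using lo by (intro cos_monotone_0_pi_le) auto
  next
    case False
    have "cos x = cos (2 * pi - x)" by (simp add: cos_diff)
    also have "\<dots> \<le> cos (2 * pi / K)" using hi False by (intro cos_monotone_0_pi_le) auto
    finally show ?thesis .
  qed
  with \<open>cos (2 * pi * of_int z / K) = cos x\<close> show ?thesis by simp
qed

lemma abs_sin_le_sin:
  assumes "\<bar>d\<bar> \<le> s" "s \<le> pi / 2"
  shows "\<bar>sin d\<bar> \<le> sin s"
proof -
  have "\<bar>sin d\<bar> = sin \<bar>d\<bar>"
  proof (cases "0 \<le> d")
    case True
    then show ?thesis using assms by (simp add: sin_ge_zero)
  next
    case False
    then have "0 \<le> sin (- d)" using assms by (intro sin_ge_zero) auto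
    then show ?thesis using False by simp
  qed
  also have "\<dots> \<le> sin s" using assms by (intro sin_monotone_2pi_le) auto
  finally show ?thesis .
qed

lemma norm_diff_segment_point_sq:
  fixes v x y :: "'a::real_inner"
  assumes "v \<bullet> v = 1" "x \<bullet> x = 1" "y \<bullet> y = 1"
  shows "norm (v - (l *\<^sub>R x + (1 - l) *\<^sub>R y))^2
    = 1 + l^2 + (1 - l)^2 - 2 * l * (v \<bullet> x) - 2 * (1 - l) * (v \<bullet> y) + 2 * l * (1 - l) * (x \<bullet> y)"
  unfolding power2_norm_eq_inner
  by (simp add: inner_diff_left inner_diff_right inner_add_left inner_add_right assms
      inner_commute[of x v] inner_commute[of y v] inner_commute[of y x] power2_eq_square
      algebra_simps)

lemma exists_segment_point_near:
  fixes v x y :: "'a::real_inner"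
  assumes unit: "v \<bullet> v = 1" "x \<bullet> x = 1" "y \<bullet> y = 1"
    and vx: "v \<bullet> x = cos a" and vy: "v \<bullet> y = cos b" and xy: "x \<bullet> y = cos (a + b)"
    and ab: "0 \<le> a" "0 \<le> b" "a + b \<le> pi"
  shows "\<exists>l. 0 \<le> l \<and> l \<le> 1 \<and>
    norm (v - (l *\<^sub>R x + (1 - l) *\<^sub>R y)) \<le> cos ((a - b) / 2) - cos ((a + b) / 2)"
proof -
  define s d where "s = (a + b) / 2" and "d = (a - b) / 2"
  have d_le: "\<bar>d\<bar> \<le> s" and s_le: "s \<le> pi / 2" using ab unfolding s_def d_def by auto
  have sin_d: "\<bar>sin d\<bar> \<le> sin s" by (rule abs_sin_le_sin[OF d_le s_le])
  have "cos s \<le> cos \<bar>d\<bar>" using d_le s_le by (intro cos_monotone_0_pi_le) auto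
  then have cos_le: "cos s \<le> cos d" by simp
  \<comment> \<open>\<open>v\<close>, \<open>x\<close>, \<open>y\<close> lie on one great circle with \<open>v\<close> between \<open>x\<close> and \<open>y\<close>; this \<open>l\<close> gives
    the foot of the perpendicular from \<open>v\<close> to the chord \<open>xy\<close>\<close>
  define \<mu> where "\<mu> = sin d / sin s"
  have sin_d_eq: "sin d = \<mu> * sin s"
    using sin_d by (cases "sin s = 0") (auto simp: \<mu>_def)
  have "\<bar>\<mu>\<bar> \<le> 1"
  proof (cases "sin s = 0")
    case False
    then have "0 < sin s" using sin_d by linarith
    then show ?thesis using sin_d by (simp add: \<mu>_def abs_divide divide_le_eq)
  qed (simp add: \<mu>_def)
  define l where "l = (1 - \<mu>) / 2"
  have l: "0 \<le> l" "l \<le> 1" using \<open>\<bar>\<mu>\<bar> \<le> 1\<close> unfolding l_def by auto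
  have ca: "cos a = cos s * cos d - sin s * sin d"
    using cos_add[of s d] unfolding s_def d_def by (simp add: field_simps)
  have cb: "cos b = cos s * cos d + sin s * sin d"
    using cos_diff[of s d] unfolding s_def d_def by (simp add: field_simps)
  have "2 * s = a + b" unfolding s_def by simp
  then have cab: "cos (a + b) = (cos s)^2 - (sin s)^2"
    using cos_double[of s] by simp
  have "norm (v - (l *\<^sub>R x + (1 - l) *\<^sub>R y))^2
      = 1 + l^2 + (1 - l)^2 - 2 * l * cos a - 2 * (1 - l) * cos b + 2 * l * (1 - l) * cos (a + b)"
    unfolding norm_diff_segment_point_sq[OF unit] vx vy xy ..
  also have "\<dots> = (cos d - cos s)^2"
    using sin_cos_squared_add[of s] sin_cos_squared_add[of d, unfolded sin_d_eq] l_def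
    unfolding ca cb cab sin_d_eq by algebra
  finally have sq: "norm (v - (l *\<^sub>R x + (1 - l) *\<^sub>R y))^2 = (cos d - cos s)^2" .
  have "norm (v - (l *\<^sub>R x + (1 - l) *\<^sub>R y)) \<le> cos d - cos s"
    by (rule power2_le_imp_le) (use sq cos_le in simp_all)
  then show ?thesis using l unfolding s_def d_def by (intro exI[of _ l]) simp
qed

lemma sorted_enumeration_exists:
  fixes \<theta> :: "'k::finite \<Rightarrow> real"
  shows "\<exists>\<sigma>. bij_betw \<sigma> {..<CARD('k)} UNIV \<and>
    (\<forall>i j. i \<le> j \<longrightarrow> j < CARD('k) \<longrightarrow> \<theta> (\<sigma> i) \<le> \<theta> (\<sigma> j))"
proof -
  obtain xs where xs: "set xs = (UNIV::'k set)" "distinct xs"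
    using finite_distinct_list[of "UNIV::'k set"] by auto
  define L where "L = sort_key \<theta> xs"
  have L: "set L = UNIV" "distinct L" "length L = CARD('k)"
    unfolding L_def using xs distinct_card[OF xs(2)] by auto
  have "sorted (map \<theta> L)" unfolding L_def by simp
  then have "\<theta> (L ! i) \<le> \<theta> (L ! j)" if "i \<le> j" "j < CARD('k)" for i j
    using that L sorted_nth_mono[of "map \<theta> L" i j] by simp
  moreover have "bij_betw ((!) L) {..<CARD('k)} UNIV"
    by (rule bij_betw_nth) (use L in auto)
  ultimately show ?thesis by blast
qed

locale angular_family =
  fixes w :: "'k::finite \<Rightarrow> 'a::euclidean_space" and \<theta> :: "'k \<Rightarrow> real"
  assumes angle_nonneg: "0 \<le> \<theta> k" and angle_less: "\<theta> k < 2 * pi"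
    and inner_eq_cos: "w i \<bullet> w j = cos (\<theta> i - \<theta> j)"
begin

definition sort_by_angle :: "nat \<Rightarrow> 'k" where
  "sort_by_angle = (SOME \<sigma>. bij_betw \<sigma> {..<CARD('k)} UNIV \<and>
     (\<forall>i j. i \<le> j \<longrightarrow> j < CARD('k) \<longrightarrow> \<theta> (\<sigma> i) \<le> \<theta> (\<sigma> j)))"

lemma sort_by_angle_bij: "bij_betw sort_by_angle {..<CARD('k)} UNIV"
  and sort_by_angle_mono: "i \<le> j \<Longrightarrow> j < CARD('k) \<Longrightarrow> \<theta> (sort_by_angle i) \<le> \<theta> (sort_by_angle j)"
  using someI_ex[OF sorted_enumeration_exists[of \<theta>]] unfolding sort_by_angle_def by blast+

definition nth_by_angle :: "nat \<Rightarrow> 'k" where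
  "nth_by_angle n = sort_by_angle (n mod CARD('k))"

definition lifted_angle :: "nat \<Rightarrow> real" where
  "lifted_angle n = \<theta> (nth_by_angle n) + 2 * pi * real (n div CARD('k))"

definition gap :: "nat \<Rightarrow> real" where
  "gap n = lifted_angle (Suc n) - lifted_angle n"

lemma lifted_angle_le_Suc: "lifted_angle n \<le> lifted_angle (Suc n)"
proof (cases "Suc (n mod CARD('k)) = CARD('k)")
  case True
  then have "Suc n mod CARD('k) = 0" "Suc n div CARD('k) = Suc (n div CARD('k))"
    by (simp_all add: mod_Suc div_Suc)
  then show ?thesis
    using angle_less[of "nth_by_angle n"] angle_nonneg[of "nth_by_angle (Suc n)"]
    unfolding lifted_angle_def by (simp add: algebra_simps)
next
  case False
  then have "Suc n mod CARD('k) = Suc (n mod CARD('k))" "Suc n div CARD('k) = n div CARD('k)"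
    by (simp_all add: mod_Suc div_Suc)
  moreover have "Suc (n mod CARD('k)) < CARD('k)"
    using False by (intro Suc_lessI) simp_all
  ultimately show ?thesis
    unfolding lifted_angle_def nth_by_angle_def
    using sort_by_angle_mono[of "n mod CARD('k)" "Suc (n mod CARD('k))"] by simp
qed

lemma gap_nonneg: "0 \<le> gap n"
  unfolding gap_def using lifted_angle_le_Suc by simp

lemma lifted_angle_add_card: "lifted_angle (n + CARD('k)) = lifted_angle n + 2 * pi"
  unfolding lifted_angle_def nth_by_angle_def by (simp add: algebra_simps)

lemma inner_nth_by_angle:
  "w (nth_by_angle i) \<bullet> w (nth_by_angle j) = cos (lifted_angle i - lifted_angle j)"
proof -
  have "lifted_angle i - lifted_angle j = \<theta> (nth_by_angle i) - \<theta> (nth_by_angle j)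
      + 2 * pi * of_int (int (i div CARD('k)) - int (j div CARD('k)))"
    unfolding lifted_angle_def by (simp add: algebra_simps)
  then show ?thesis by (simp only: inner_eq_cos cos_add_two_pi_int)
qed

lemma nth_by_angle_surj: "\<exists>n<CARD('k). nth_by_angle n = k"
proof -
  have "k \<in> sort_by_angle ` {..<CARD('k)}"
    using bij_betw_imp_surj_on[OF sort_by_angle_bij] by simp
  then obtain n where "n < CARD('k)" "sort_by_angle n = k" by auto
  then show ?thesis unfolding nth_by_angle_def by (intro exI[of _ n]) simp
qed

lemma nth_by_angle_add_neq:
  assumes "0 < j" "j < CARD('k)"
  shows "nth_by_angle (n + j) \<noteq> nth_by_angle n"
proof
  assume "nth_by_angle (n + j) = nth_by_angle n"
  then have "(n + j) mod CARD('k) = n mod CARD('k)"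
    using bij_betw_imp_inj_on[OF sort_by_angle_bij] unfolding nth_by_angle_def
    by (auto dest: inj_onD)
  then have "CARD('k) dvd j" by (simp add: mod_eq_dvd_iff_nat)
  with assms show False using nat_dvd_not_less by blast
qed

lemma sum_gap: "(\<Sum>n<CARD('k). gap n) = 2 * pi"
  using sum_lessThan_telescope[of lifted_angle "CARD('k)"] lifted_angle_add_card[of 0]
  by (simp add: gap_def)

lemma sum_double_gap: "(\<Sum>n<CARD('k). gap n + gap (Suc n)) = 4 * pi"
proof -
  have "(\<Sum>n<CARD('k). gap (Suc n)) = 2 * pi"
    using sum_lessThan_telescope[of "\<lambda>n. lifted_angle (Suc n)" "CARD('k)"]
      lifted_angle_add_card[of 1]
    by (simp add: gap_def)
  then show ?thesis using sum_gap by (simp add: sum.distrib)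
qed

lemma dist_to_rest_le_gaps:
  assumes "CARD('k) \<ge> 2" and "gap n + gap (Suc n) \<le> pi"
  shows "dist_to_rest w (nth_by_angle (Suc n))
    \<le> cos ((gap n - gap (Suc n)) / 2) - cos ((gap n + gap (Suc n)) / 2)"
proof -
  let ?v = "w (nth_by_angle (Suc n))" and ?x = "w (nth_by_angle n)"
    and ?y = "w (nth_by_angle (Suc (Suc n)))"
  have unit: "w k \<bullet> w k = 1" for k using inner_eq_cos[of k k] by simp
  have vx: "?v \<bullet> ?x = cos (gap n)" by (simp add: inner_nth_by_angle gap_def)
  have vy: "?v \<bullet> ?y = cos (gap (Suc n))"
    using cos_minus[of "gap (Suc n)"] by (simp add: inner_nth_by_angle gap_def)
  have xy: "?x \<bullet> ?y = cos (gap n + gap (Suc n))"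
    using cos_minus[of "gap n + gap (Suc n)"] by (simp add: inner_nth_by_angle gap_def)
  obtain l where l: "0 \<le> l" "l \<le> 1"
    "norm (?v - (l *\<^sub>R ?x + (1 - l) *\<^sub>R ?y))
      \<le> cos ((gap n - gap (Suc n)) / 2) - cos ((gap n + gap (Suc n)) / 2)"
    using exists_segment_point_near[OF unit unit unit vx vy xy gap_nonneg gap_nonneg assms(2)]
    by blast
  have "nth_by_angle n \<noteq> nth_by_angle (Suc n)"
    using nth_by_angle_add_neq[of 1 n] assms(1) by auto
  moreover have "nth_by_angle (Suc (Suc n)) \<noteq> nth_by_angle (Suc n)"
    using nth_by_angle_add_neq[of 1 "Suc n"] assms(1) by auto
  ultimately have "l *\<^sub>R ?x + (1 - l) *\<^sub>R ?y \<in> convex hull {w j |j. j \<noteq> nth_by_angle (Suc n)}"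
    using l(1,2) by (intro convexD[OF convex_convex_hull]) (auto intro!: hull_inc)
  then have "dist_to_rest w (nth_by_angle (Suc n)) \<le> norm (?v - (l *\<^sub>R ?x + (1 - l) *\<^sub>R ?y))"
    unfolding dist_to_rest_def by (rule dist_hull_le)
  with l(3) show ?thesis by linarith
qed

lemma exists_pair_inner_ge:
  assumes "CARD('k) \<ge> 2"
  shows "\<exists>i j. i \<noteq> j \<and> cos (2 * pi / CARD('k)) \<le> w i \<bullet> w j"
proof -
  obtain n where n: "n < CARD('k)" "gap n \<le> 2 * pi / CARD('k)"
    using ex_le_average[OF finite_lessThan lessThan_CARD_nonempty[where 'k = 'k], of gap] sum_gap
    by auto
  have "2 * pi / CARD('k) \<le> pi" using assms by (intro mult_pi_divide_le_pi) auto
  then have "cos (2 * pi / CARD('k)) \<le> cos (gap n)"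
    using n(2) gap_nonneg by (intro cos_monotone_0_pi_le) auto
  also have "cos (gap n) = w (nth_by_angle (Suc n)) \<bullet> w (nth_by_angle n)"
    by (simp add: inner_nth_by_angle gap_def)
  finally show ?thesis
    using nth_by_angle_add_neq[of 1 n] assms by auto
qed

lemma exists_dist_to_rest_le:
  assumes K4: "CARD('k) \<ge> 4"
  shows "\<exists>k. dist_to_rest w k \<le> 1 - cos (2 * pi / CARD('k))"
proof -
  define \<alpha> where "\<alpha> = 2 * pi / CARD('k)"
  have "4 * pi / CARD('k) \<le> pi" using K4 by (intro mult_pi_divide_le_pi) auto
  then have \<alpha>: "2 * \<alpha> \<le> pi" unfolding \<alpha>_def by simp
  obtain n where "gap n + gap (Suc n) \<le> 4 * pi / CARD('k)"
    using ex_le_average[OF finite_lessThan lessThan_CARD_nonempty[where 'k = 'k],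
        of "\<lambda>n. gap n + gap (Suc n)"] sum_double_gap
    by auto
  then have dg: "gap n + gap (Suc n) \<le> 2 * \<alpha>" unfolding \<alpha>_def by simp
  have "cos \<alpha> \<le> cos ((gap n + gap (Suc n)) / 2)"
    using dg \<alpha> gap_nonneg[of n] gap_nonneg[of "Suc n"] by (intro cos_monotone_0_pi_le) auto
  moreover have "dist_to_rest w (nth_by_angle (Suc n))
      \<le> cos ((gap n - gap (Suc n)) / 2) - cos ((gap n + gap (Suc n)) / 2)"
    using dist_to_rest_le_gaps K4 dg \<alpha> by simp
  moreover have "cos ((gap n - gap (Suc n)) / 2) \<le> 1" by simp
  ultimately have "dist_to_rest w (nth_by_angle (Suc n)) \<le> 1 - cos \<alpha>" by linarith
  then show ?thesis unfolding \<alpha>_def by blast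
qed

lemma double_gap_ge_if_dist_to_rest_ge:
  assumes K4: "CARD('k) \<ge> 4" and far: "\<forall>k. 1 - cos (2 * pi / CARD('k)) \<le> dist_to_rest w k"
  shows "4 * pi / CARD('k) \<le> gap n + gap (Suc n)"
proof (rule ccontr)
  define \<alpha> where "\<alpha> = 2 * pi / CARD('k)"
  have "4 * pi / CARD('k) \<le> pi" using K4 by (intro mult_pi_divide_le_pi) auto
  then have \<alpha>: "2 * \<alpha> \<le> pi" unfolding \<alpha>_def by simp
  assume "\<not> ?thesis"
  then have dg: "gap n + gap (Suc n) < 2 * \<alpha>" unfolding \<alpha>_def by simp
  then have "cos \<alpha> < cos ((gap n + gap (Suc n)) / 2)"
    using \<alpha> gap_nonneg[of n] gap_nonneg[of "Suc n"] by (intro cos_monotone_0_pi) auto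
  moreover have "dist_to_rest w (nth_by_angle (Suc n))
      \<le> cos ((gap n - gap (Suc n)) / 2) - cos ((gap n + gap (Suc n)) / 2)"
    using dist_to_rest_le_gaps K4 dg \<alpha> by simp
  moreover have "cos ((gap n - gap (Suc n)) / 2) \<le> 1" by simp
  moreover have "1 - cos \<alpha> \<le> dist_to_rest w (nth_by_angle (Suc n))"
    using far unfolding \<alpha>_def by blast
  ultimately show False by linarith
qed

lemma gap_eq_if_dist_to_rest_ge:
  assumes K4: "CARD('k) \<ge> 4" and far: "\<forall>k. 1 - cos (2 * pi / CARD('k)) \<le> dist_to_rest w k"
    and n: "n < CARD('k)"
  shows "gap n = 2 * pi / CARD('k)"
proof -
  define \<alpha> where "\<alpha> = 2 * pi / CARD('k)"
  have "4 * pi / CARD('k) \<le> pi" using K4 by (intro mult_pi_divide_le_pi) auto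
  then have \<alpha>: "2 * \<alpha> \<le> pi" unfolding \<alpha>_def by simp
  have "gap n + gap (Suc n) = 4 * pi / CARD('k)"
    using eq_average_if_ge_average[of "{..<CARD('k)}" "\<lambda>n. gap n + gap (Suc n)" n]
      sum_double_gap double_gap_ge_if_dist_to_rest_ge[OF K4 far] n by simp
  then have dg: "gap n + gap (Suc n) = 2 * \<alpha>" unfolding \<alpha>_def by simp
  have "1 - cos \<alpha> \<le> dist_to_rest w (nth_by_angle (Suc n))"
    using far unfolding \<alpha>_def by blast
  also have "\<dots> \<le> cos ((gap n - gap (Suc n)) / 2) - cos \<alpha>"
    using dist_to_rest_le_gaps[of n] K4 dg \<alpha> by simp
  finally have one_le: "1 \<le> cos ((gap n - gap (Suc n)) / 2)" by simp
  have "gap n = gap (Suc n)"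
  proof (rule ccontr)
    assume "gap n \<noteq> gap (Suc n)"
    moreover have "\<bar>(gap n - gap (Suc n)) / 2\<bar> \<le> pi"
      using dg \<alpha> gap_nonneg[of n] gap_nonneg[of "Suc n"] by (simp add: abs_le_iff)
    ultimately have "cos \<bar>(gap n - gap (Suc n)) / 2\<bar> < cos 0"
      by (intro cos_monotone_0_pi) auto
    then have "cos ((gap n - gap (Suc n)) / 2) < 1" by (simp only: cos_abs_real cos_zero)
    with one_le show False by simp
  qed
  then show ?thesis using dg unfolding \<alpha>_def by simp
qed

lemma pairwise_inner_le_if_dist_to_rest_ge:
  assumes K4: "CARD('k) \<ge> 4" and far: "\<forall>k. 1 - cos (2 * pi / CARD('k)) \<le> dist_to_rest w k"
  shows "pairwise_inner_le (cos (2 * pi / CARD('k))) w"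
proof -
  have lifted: "lifted_angle p = lifted_angle 0 + 2 * pi * real p / CARD('k)"
    if "p \<le> CARD('k)" for p
    using that
  proof (induction p)
    case (Suc p)
    then have "gap p = 2 * pi / CARD('k)" by (intro gap_eq_if_dist_to_rest_ge[OF K4 far]) simp
    with Suc show ?case by (simp add: gap_def field_simps)
  qed simp
  show ?thesis
    unfolding pairwise_inner_le_def
  proof (intro allI impI)
    fix i j :: 'k assume "i \<noteq> j"
    obtain p q where p: "p < CARD('k)" "nth_by_angle p = i"
      and q: "q < CARD('k)" "nth_by_angle q = j"
      using nth_by_angle_surj[of i] nth_by_angle_surj[of j] by blast
    have "w i \<bullet> w j = cos (lifted_angle p - lifted_angle q)"
      unfolding p(2)[symmetric] q(2)[symmetric] by (rule inner_nth_by_angle)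
    also have "lifted_angle p - lifted_angle q = 2 * pi * of_int (int p - int q) / CARD('k)"
      using lifted[of p] lifted[of q] p q by (simp add: field_simps)
    also have "cos \<dots> \<le> cos (2 * pi / CARD('k))"
      using K4 p q \<open>i \<noteq> j\<close> by (intro cos_le_cos_two_pi_div) auto
    finally show "w i \<bullet> w j \<le> cos (2 * pi / CARD('k))" .
  qed
qed

end

lemma planar_angular_family:
  fixes w :: "'k::finite \<Rightarrow> 'a::euclidean_space"
  assumes dim: "DIM('a) = 2" and unit: "\<forall>k. norm (w k) = 1"
  shows "\<exists>\<theta>. angular_family w \<theta>"
proof -
  obtain b0 b1 :: 'a where B: "Basis = {b0, b1}" "b0 \<noteq> b1"
    using dim card_2_iff by metis
  have inner2: "x \<bullet> y = (x \<bullet> b0) * (y \<bullet> b0) + (x \<bullet> b1) * (y \<bullet> b1)" for x y :: 'a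
    unfolding euclidean_inner[of x y] B(1) using B(2) by simp
  have "\<exists>t. 0 \<le> t \<and> t < 2 * pi \<and> w k \<bullet> b0 = cos t \<and> w k \<bullet> b1 = sin t" for k
  proof -
    have "(w k \<bullet> b0)^2 + (w k \<bullet> b1)^2 = 1"
      using unit inner2[of "w k" "w k"] by (simp add: norm_eq_1 power2_eq_square)
    then show ?thesis by (metis sincos_total_2pi)
  qed
  then obtain \<theta> where \<theta>:
    "\<forall>k. 0 \<le> \<theta> k \<and> \<theta> k < 2 * pi \<and> w k \<bullet> b0 = cos (\<theta> k) \<and> w k \<bullet> b1 = sin (\<theta> k)"
    by metis
  have "angular_family w \<theta>"
  proof
    show "0 \<le> \<theta> k" and "\<theta> k < 2 * pi" for k using \<theta> by blast+
    show "w i \<bullet> w j = cos (\<theta> i - \<theta> j)" for i j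
      using \<theta> inner2[of "w i" "w j"] by (simp add: cos_diff)
  qed
  then show ?thesis by blast
qed

lemma regular_polygon_exists:
  assumes dim: "DIM('a::euclidean_space) \<ge> 2" and K2: "CARD('k::finite) \<ge> 2"
  shows "\<exists>w::'k \<Rightarrow> 'a. (\<forall>k. norm (w k) = 1) \<and> pairwise_inner_le (cos (2 * pi / CARD('k))) w"
proof -
  have "\<not> card (Basis :: 'a set) \<le> Suc 0" using dim by simp
  then obtain b0 b1 :: 'a where b: "b0 \<in> Basis" "b1 \<in> Basis" "b0 \<noteq> b1"
    using card_le_Suc0_iff_eq[of "Basis :: 'a set"] by auto
  obtain g :: "'k \<Rightarrow> nat" where g: "bij_betw g UNIV {0..<CARD('k)}"
    using ex_bij_betw_finite_nat[of "UNIV :: 'k set"] by auto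
  define \<phi> where "\<phi> k = 2 * pi * real (g k) / CARD('k)" for k
  define w where "w k = cos (\<phi> k) *\<^sub>R b0 + sin (\<phi> k) *\<^sub>R b1" for k
  have inner_w: "w i \<bullet> w j = cos (\<phi> i - \<phi> j)" for i j
    using b by (simp add: w_def inner_add_left inner_add_right inner_Basis cos_diff)
  have "w i \<bullet> w j \<le> cos (2 * pi / CARD('k))" if "i \<noteq> j" for i j
  proof -
    have g_ij: "g i < CARD('k)" "g j < CARD('k)" "g i \<noteq> g j"
      using g that by (auto simp: bij_betw_def inj_on_def)
    have "w i \<bullet> w j = cos (2 * pi * of_int (int (g i) - int (g j)) / CARD('k))"
      unfolding inner_w \<phi>_def by (simp add: diff_divide_distrib algebra_simps)
    also have "\<dots> \<le> cos (2 * pi / CARD('k))"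
      using K2 g_ij by (intro cos_le_cos_two_pi_div) auto
    finally show ?thesis .
  qed
  then show ?thesis
    by (intro exI[of _ w]) (simp add: norm_eq_1 inner_w pairwise_inner_le_def)
qed

lemma argmax_rho_eq_planar:
  assumes d2: "CARD('d::finite) = 2" and K4: "CARD('k::finite) \<ge> 4"
  shows "argmax_on (OB :: (real^'k^'d) set) rho_one_vs_rest = argmax_on OB rho_one_vs_one"
proof (rule argmax_rho_eq_if_threshold[where c = "cos (2 * pi / CARD('k))"])
  have angular: "\<exists>\<theta>. angular_family w \<theta>" if unit: "\<forall>k. norm (w k) = 1" for w :: "'k \<Rightarrow> real^'d"
    using planar_angular_family[OF _ unit] d2 by simp
  show "CARD('k) \<ge> 2" using K4 by simp
  show "\<exists>i j. i \<noteq> j \<and> cos (2 * pi / CARD('k)) \<le> w i \<bullet> w j"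
    if unit: "\<forall>k. norm (w k) = 1" for w :: "'k \<Rightarrow> real^'d"
  proof -
    obtain \<theta> where "angular_family w \<theta>" using angular[OF unit] ..
    then show ?thesis by (rule angular_family.exists_pair_inner_ge) (use K4 in simp)
  qed
  show "\<exists>k. dist_to_rest w k \<le> 1 - cos (2 * pi / CARD('k))"
    if unit: "\<forall>k. norm (w k) = 1" for w :: "'k \<Rightarrow> real^'d"
  proof -
    obtain \<theta> where "angular_family w \<theta>" using angular[OF unit] ..
    then show ?thesis by (rule angular_family.exists_dist_to_rest_le) (fact K4)
  qed
  show "pairwise_inner_le (cos (2 * pi / CARD('k))) w"
    if unit: "\<forall>k. norm (w k) = 1" and far: "\<forall>k. 1 - cos (2 * pi / CARD('k)) \<le> dist_to_rest w k"
    for w :: "'k \<Rightarrow> real^'d"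
  proof -
    obtain \<theta> where "angular_family w \<theta>" using angular[OF unit] ..
    then show ?thesis by (rule angular_family.pairwise_inner_le_if_dist_to_rest_ge) (fact K4 far)+
  qed
  show "\<exists>w::'k \<Rightarrow> real^'d. (\<forall>k. norm (w k) = 1) \<and> pairwise_inner_le (cos (2 * pi / CARD('k))) w"
    by (rule regular_polygon_exists) (use d2 K4 in simp_all)
qed

theorem mainTheorem9:
  assumes "CARD('k::finite) \<ge> 2"
    and "CARD('d::finite) = 2 \<or> CARD('k) \<le> CARD('d) + 1"
  shows "argmax_on (OB :: (real^'k^'d) set) rho_one_vs_rest
       = argmax_on (OB :: (real^'k^'d) set) rho_one_vs_one"
proof (cases "CARD('k) \<le> CARD('d) + 1")
  case True
  then show ?thesis by (rule argmax_rho_eq_simplex[OF assms(1)])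
next
  case False
  with assms(2) have "CARD('d) = 2" and "CARD('k) \<ge> 4" by auto
  then show ?thesis by (rule argmax_rho_eq_planar)
qed

end
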